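(* Let $U^*$ and $V^*$ be standard uniform random variables with arbitrary dependence, let $T_1,T_2$ be regular uniform-distribution-preserving transformations, and let $Z_1,Z_2$ be $\mathcal{U}(0,1)$ random variables, independent of each other and of $(U^*,V^* )$ (independent stochastic inversion). Set $U=T_1^\leftarrow(U^*,Z_1)$ and $V=T_2^\leftarrow(V^*,Z_2)$. Then the distribution of $(U,V)$ is (i) v-symmetric, i.e. $(U,V)\stackrel{d}{=}(1-U,V)$, if $T_1$ is symmetric around $0.5$; (ii) h-symmetric, i.e. $(U,V)\stackrel{d}{=}(U,1-V)$, if $T_2$ is symmetric around $0.5$; (iii) jointly symmetric (both h- and v-symmetric) if both $T_1$ and $T_2$ are symmetric around $0.5$.
   Context: $T:[0,1]\to[0,1]$ is uniform-distribution-preserving (udp) if $T(U)\sim\mathcal{U}(0,1)$ for $U\sim\mathcal{U}(0,1)$; it is regular if there is a finite partition $0=a_0<\dots<a_L=1$ with $T$ continuously differentiable on each $A_\ell=(a_{\ell-1},a_\ell)$; $A=\bigcup_\ell A_\ell$. $T$ is symmetric around $0.5$ if $T(1-u)=T(u)$ for all $u$. Stochastic inverse: for $x\in T(A)$, with $\{u\in A:T(u)=x\}=\{r_1(x),\dots,r_{n(x)}(x)\}$ (finite, ordered increasingly), let $G_x$ be the distribution function of the discrete law putting mass $1/|T'(r_i(x))|$ on $r_i(x)$ (these sum to one) and set $T^\leftarrow(x,Z)=G_x^{-1}(Z)$, with $G^{-1}(z)=\inf\{t:G(t)\ge z\}$; for $x\notin T(A)$, $T^\leftarrow(x,Z)=0$.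 *)

theory Defs
  imports "HOL-Probability.Probability"
begin

definition unif01 :: "real measure" where
  "unif01 = uniform_measure lborel {0..1}"

definition udp :: "(real \<Rightarrow> real) \<Rightarrow> bool" where
  "udp T \<longleftrightarrow> (\<forall>u\<in>{0..1}. T u \<in> {0..1})
     \<and> T \<in> borel_measurable (restrict_space borel {0..1})
     \<and> distr (restrict_space lborel {0..1}) lborel T = unif01"

definition regular_partition :: "(real \<Rightarrow> real) \<Rightarrow> (nat \<Rightarrow> real) \<Rightarrow> nat \<Rightarrow> bool" where
  "regular_partition T a L \<longleftrightarrow> 1 \<le> L \<and> a 0 = 0 \<and> a L = 1
     \<and> (\<forall>l<L. a l < a (Suc l))
     \<and> (\<forall>l<L. \<exists>T'. continuous_on {a l<..<a (Suc l)} T'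
            \<and> (\<forall>u\<in>{a l<..<a (Suc l)}. (T has_real_derivative T' u) (at u)))"

definition part_set :: "(nat \<Rightarrow> real) \<Rightarrow> nat \<Rightarrow> real set" where
  "part_set a L = (\<Union>l<L. {a l<..<a (Suc l)})"

definition stoch_G :: "(real \<Rightarrow> real) \<Rightarrow> real set \<Rightarrow> real \<Rightarrow> real \<Rightarrow> real" where
  "stoch_G T A x t = (\<Sum>r\<in>{u\<in>A. T u = x \<and> u \<le> t}. 1 / \<bar>deriv T r\<bar>)"

definition stoch_inv :: "(real \<Rightarrow> real) \<Rightarrow> real set \<Rightarrow> real \<Rightarrow> real \<Rightarrow> real" where
  "stoch_inv T A x z = (if x \<in> T ` A then Inf {t. z \<le> stoch_G T A x t} else 0)"

definition symmetric_half :: "(real \<Rightarrow> real) \<Rightarrow> bool" where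
  "symmetric_half T \<longleftrightarrow> (\<forall>u\<in>{0..1}. T (1 - u) = T u)"

end

theory Submission
  imports Defs
begin

(*
  For almost every x the weights 1/|T'(r)| of the roots r of T r = x sum to one: by the change of
  variables on each piece, where T is injective, they form the density of the image of the uniform
  law under T, which is uniform again. If T is symmetric around 1/2, the roots and their weights
  are invariant under r \<mapsto> 1 - r, so the quantile function of the discrete law satisfies
  G_x^{-1}(1 - z) = 1 - G_x^{-1}(z) for all but finitely many z. Since Z_1 is uniform and
  independent of (U*, V*, Z_2), replacing Z_1 by 1 - Z_1 does not change the joint law, while it
  turns U into 1 - U almost surely; this is v-symmetry. h-symmetry is the same argument with the
  coordinates exchanged.
*)

section \<open>Quantiles of finite discrete measures\<close>

definition discrete_cdf :: "real set \<Rightarrow> (real \<Rightarrow> real) \<Rightarrow> real \<Rightarrow> real" where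
  "discrete_cdf R m t = (\<Sum>r\<in>{r\<in>R. r \<le> t}. m r)"

definition discrete_quantile :: "real set \<Rightarrow> (real \<Rightarrow> real) \<Rightarrow> real \<Rightarrow> real" where
  "discrete_quantile R m z = Inf {t. z \<le> discrete_cdf R m t}"

lemma discrete_cdf_nonneg: "(\<And>r. r \<in> R \<Longrightarrow> 0 \<le> m r) \<Longrightarrow> 0 \<le> discrete_cdf R m t"
  unfolding discrete_cdf_def by (intro sum_nonneg) auto

lemma discrete_cdf_mono:
  assumes "finite R" "\<And>r. r \<in> R \<Longrightarrow> 0 \<le> m r" "t \<le> t'"
  shows "discrete_cdf R m t \<le> discrete_cdf R m t'"
  unfolding discrete_cdf_def using assms by (intro sum_mono2) auto

lemma discrete_cdf_le_sum:
  "finite R \<Longrightarrow> (\<And>r. r \<in> R \<Longrightarrow> 0 \<le> m r) \<Longrightarrow> discrete_cdf R m t \<le> sum m R"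
  unfolding discrete_cdf_def by (intro sum_mono2) auto

lemma discrete_cdf_le_sum_less:
  assumes "finite R" "\<And>r. r \<in> R \<Longrightarrow> 0 \<le> m r" "t < s"
  shows "discrete_cdf R m t \<le> (\<Sum>r\<in>{r\<in>R. r < s}. m r)"
  unfolding discrete_cdf_def using assms by (intro sum_mono2) auto

lemma discrete_cdf_superlevel_set:
  assumes fin: "finite R" and pos: "\<And>r. r \<in> R \<Longrightarrow> 0 < m r"
    and z: "0 < z" "z \<le> sum m R"
  obtains r where "r \<in> R" "{t. z \<le> discrete_cdf R m t} = {r..}"
    "(\<Sum>s\<in>{s\<in>R. s < r}. m s) < z"
proof -
  have nonneg: "\<And>r. r \<in> R \<Longrightarrow> 0 \<le> m r" using pos less_imp_le by blast
  define C where "C = {r\<in>R. z \<le> discrete_cdf R m r}"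
  have "R \<noteq> {}" using z by auto
  then have "discrete_cdf R m (Max R) = sum m R"
    unfolding discrete_cdf_def using fin by (intro sum.cong) auto
  then have "Max R \<in> C" unfolding C_def using z fin \<open>R \<noteq> {}\<close> by simp
  define r where "r = Min C"
  have "finite C" unfolding C_def using fin by simp
  then have "r \<in> C" and r_min: "\<And>s. s \<in> C \<Longrightarrow> r \<le> s"
    unfolding r_def using \<open>Max R \<in> C\<close> by (auto intro: Min_in)
  have below: "(\<Sum>s\<in>{s\<in>R. s < r}. m s) < z"
  proof (cases "{s\<in>R. s < r} = {}")
    case True
    then show ?thesis using z by (simp only: sum.empty)
  next
    case False
    define r' where "r' = Max {s\<in>R. s < r}"
    have "r' \<in> {s\<in>R. s < r}" unfolding r'_def using False fin by (intro Max_in) auto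
    then have r': "r' \<in> R" "r' < r" by auto
    have "{s\<in>R. s < r} = {s\<in>R. s \<le> r'}"
      using fin r' unfolding r'_def by (auto intro: Max_ge)
    moreover have "r' \<notin> C" using r' r_min by force
    ultimately show ?thesis using r' unfolding C_def discrete_cdf_def by auto
  qed
  have "{t. z \<le> discrete_cdf R m t} = {r..}"
  proof (intro set_eqI iffI)
    fix t assume "t \<in> {t. z \<le> discrete_cdf R m t}"
    then show "t \<in> {r..}"
      using discrete_cdf_le_sum_less[of R m t r] fin nonneg below by (force simp: not_le)
  next
    fix t assume "t \<in> {r..}"
    then show "t \<in> {t. z \<le> discrete_cdf R m t}"
      using discrete_cdf_mono[of R m r t] fin nonneg \<open>r \<in> C\<close> unfolding C_def by auto
  qed
  with \<open>r \<in> C\<close> below that show ?thesis unfolding C_def by blast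
qed

lemma discrete_quantile_le_iff:
  assumes "finite R" "\<And>r. r \<in> R \<Longrightarrow> 0 < m r" "0 < z" "z \<le> sum m R"
  shows "discrete_quantile R m z \<le> s \<longleftrightarrow> z \<le> discrete_cdf R m s"
proof -
  obtain r where "{t. z \<le> discrete_cdf R m t} = {r..}"
    using discrete_cdf_superlevel_set[of R m z] assms by blast
  then show ?thesis unfolding discrete_quantile_def by (metis atLeast_iff cInf_atLeast mem_Collect_eq)
qed

lemma discrete_cdf_reflect:
  assumes fin: "finite R" and total: "sum m R = 1"
    and sym: "\<And>r. r \<in> R \<Longrightarrow> 1 - r \<in> R \<and> m (1 - r) = m r"
  shows "discrete_cdf R m (1 - t) = 1 - (\<Sum>s\<in>{s\<in>R. s < t}. m s)"
proof -
  have "{s\<in>R. s \<le> 1 - t} = (\<lambda>s. 1 - s) ` {s\<in>R. t \<le> s}"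
    using sym by (auto intro!: image_eqI[where x="1 - _"])
  then have "discrete_cdf R m (1 - t) = (\<Sum>s\<in>{s\<in>R. t \<le> s}. m (1 - s))"
    unfolding discrete_cdf_def by (simp add: sum.reindex inj_on_def)
  also have "\<dots> = (\<Sum>s\<in>{s\<in>R. t \<le> s}. m s)" using sym by (intro sum.cong) auto
  also have "\<dots> = sum m R - (\<Sum>s\<in>{s\<in>R. s < t}. m s)"
  proof -
    have "R = {s\<in>R. s < t} \<union> {s\<in>R. t \<le> s}" by auto
    then have "sum m R = (\<Sum>s\<in>{s\<in>R. s < t}. m s) + (\<Sum>s\<in>{s\<in>R. t \<le> s}. m s)"
      using fin by (metis (no_types, lifting) sum.union_disjoint finite_Un disjoint_iff mem_Collect_eq not_le)
    then show ?thesis by simp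
  qed
  finally show ?thesis using total by simp
qed

lemma discrete_quantile_reflect:
  assumes fin: "finite R" and pos: "\<And>r. r \<in> R \<Longrightarrow> 0 < m r" and total: "sum m R = 1"
    and sym: "\<And>r. r \<in> R \<Longrightarrow> 1 - r \<in> R \<and> m (1 - r) = m r"
    and z: "0 < z" "z < 1" "z \<notin> discrete_cdf R m ` R"
  shows "discrete_quantile R m (1 - z) = 1 - discrete_quantile R m z"
proof -
  have nonneg: "\<And>r. r \<in> R \<Longrightarrow> 0 \<le> m r" using pos less_imp_le by blast
  have "z \<le> sum m R" using z total by simp
  then obtain r where r: "r \<in> R" and level: "{t. z \<le> discrete_cdf R m t} = {r..}"
    and below: "(\<Sum>s\<in>{s\<in>R. s < r}. m s) < z"
    using discrete_cdf_superlevel_set[of R m z] fin pos z by blast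
  have above: "z < discrete_cdf R m r" using level z(3) r by force
  have "{t. 1 - z \<le> discrete_cdf R m t} = {1 - r..}"
  proof (intro set_eqI iffI)
    fix t assume "t \<in> {t. 1 - z \<le> discrete_cdf R m t}"
    moreover have "discrete_cdf R m t < 1 - z" if "t < 1 - r"
      using discrete_cdf_le_sum_less[of R m t "1 - r"] fin nonneg that above
        discrete_cdf_reflect[OF fin total sym, of "1 - r"] by simp
    ultimately show "t \<in> {1 - r..}" by force
  next
    fix t assume "t \<in> {1 - r..}"
    then show "t \<in> {t. 1 - z \<le> discrete_cdf R m t}"
      using discrete_cdf_mono[of R m "1 - r" t] fin nonneg below
        discrete_cdf_reflect[OF fin total sym, of r] by simp
  qed
  then show ?thesis using level unfolding discrete_quantile_def by simp
qed

section \<open>Uniform-distribution-preserving maps\<close>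

lemma emeasure_unif01:
  "B \<in> sets borel \<Longrightarrow> emeasure unif01 B = emeasure lborel (B \<inter> {0..1})"
  by (simp add: unif01_def Int_commute divide_ennreal_def)

lemma sets_unif01 [simp, measurable_cong]: "sets unif01 = sets borel"
  unfolding unif01_def by simp

lemma prob_space_unif01: "prob_space unif01"
  unfolding unif01_def by (intro prob_space_uniform_measure) auto

lemma AE_unif01I: "(AE x in lborel. x \<in> {0..1} \<longrightarrow> P x) \<Longrightarrow> AE x in unif01. P x"
  unfolding unif01_def by (rule AE_uniform_measureI) simp_all

lemma distr_lborel_reflect: "distr lborel borel (\<lambda>x::real. 1 - x) = lborel"
  using lborel_real_affine[of "-1" 1] by (simp add: density_1)

lemma distr_unif01_reflect: "distr unif01 borel (\<lambda>x. 1 - x) = unif01"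
proof (rule measure_eqI)
  fix B assume "B \<in> sets (distr unif01 borel (\<lambda>x. 1 - x))"
  then have B: "B \<in> sets borel" by simp
  then have "(\<lambda>x::real. 1 - x) -` B \<in> sets borel" by (rule measurable_sets_borel[rotated]) simp
  then have "emeasure (distr unif01 borel (\<lambda>x. 1 - x)) B = emeasure lborel ((\<lambda>x. 1 - x) -` B \<inter> {0..1})"
    using B by (simp add: emeasure_distr emeasure_unif01)
  also have "(\<lambda>x::real. 1 - x) -` B \<inter> {0..1} = (\<lambda>x. 1 - x) -` (B \<inter> {0..1})" by auto
  also have "emeasure lborel \<dots> = emeasure (distr lborel borel (\<lambda>x. 1 - x)) (B \<inter> {0..1})"
    using B by (simp add: emeasure_distr)
  also have "\<dots> = emeasure unif01 B"
    using B by (simp add: distr_lborel_reflect emeasure_unif01)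
  finally show "emeasure (distr unif01 borel (\<lambda>x. 1 - x)) B = emeasure unif01 B" .
qed simp

lemma udp_preimage_borel:
  assumes "udp T" "B \<in> sets borel"
  shows "T -` B \<inter> {0..1} \<in> sets borel"
proof -
  have "T \<in> borel_measurable (restrict_space borel {0..1})"
    using assms(1) unfolding udp_def by blast
  from measurable_sets[OF this assms(2)] show ?thesis
    by (simp add: space_restrict_space sets_restrict_space_iff)
qed

lemma udp_emeasure_preimage:
  assumes "udp T" and B: "B \<in> sets borel"
  shows "emeasure lborel (T -` B \<inter> {0..1}) = emeasure lborel (B \<inter> {0..1})"
proof -
  from assms(1) have meas: "T \<in> borel_measurable (restrict_space borel {0..1})"
    and law: "distr (restrict_space lborel {0..1}) lborel T = unif01"
    unfolding udp_def by auto
  from meas have "T \<in> restrict_space lborel {0..1} \<rightarrow>\<^sub>M lborel"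
    by (simp add: measurable_def space_restrict_space sets_restrict_space)
  then have "emeasure lborel (T -` B \<inter> {0..1}) = emeasure (distr (restrict_space lborel {0..1}) lborel T) B"
    using B by (simp add: emeasure_distr emeasure_restrict_space space_restrict_space)
  also have "\<dots> = emeasure lborel (B \<inter> {0..1})"
    unfolding law by (rule emeasure_unif01[OF B])
  finally show ?thesis .
qed

text \<open>If \<open>\<bar>D\<bar> < 1\<close>, a small interval around \<open>c\<close> would be mapped into a shorter interval,
  whose preimage could then not have the same measure.\<close>
lemma udp_abs_deriv_ge_1:
  assumes udp: "udp T" and c: "c \<in> {0<..<1}" and D: "(T has_real_derivative D) (at c)"
  shows "1 \<le> \<bar>D\<bar>"
proof (rule ccontr)
  assume "\<not> 1 \<le> \<bar>D\<bar>"
  define e where "e = (1 + \<bar>D\<bar>) / 2"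
  have e: "\<bar>D\<bar> < e" "e < 1" using \<open>\<not> 1 \<le> \<bar>D\<bar>\<close> unfolding e_def by auto
  obtain d where d: "0 < d"
    and close: "\<And>u. \<bar>u - c\<bar> < d \<Longrightarrow> \<bar>T u - T c - D * (u - c)\<bar> \<le> (e - \<bar>D\<bar>) * \<bar>u - c\<bar>"
    using D[THEN has_field_derivative_imp_has_derivative] e(1)
    unfolding has_derivative_at_alt by (metis diff_gt_0_iff_gt real_norm_def)
  define h where "h = min (d / 2) (min c (1 - c))"
  have h: "0 < h" "h < d" "{c - h..c + h} \<subseteq> {0..1}" using d c unfolding h_def by auto
  have bound: "\<bar>T u - T c\<bar> \<le> e * h" if "u \<in> {c - h..c + h}" for u
  proof -
    have "\<bar>u - c\<bar> < d" using that h(2) by auto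
    then have "\<bar>T u - T c\<bar> \<le> \<bar>D\<bar> * \<bar>u - c\<bar> + (e - \<bar>D\<bar>) * \<bar>u - c\<bar>"
      using close abs_triangle_ineq[of "D * (u - c)" "T u - T c - D * (u - c)"]
      by (fastforce simp: abs_mult)
    also have "\<dots> = e * \<bar>u - c\<bar>" by (simp add: algebra_simps)
    also have "\<dots> \<le> e * h" using that e by (intro mult_left_mono) auto
    finally show ?thesis .
  qed
  have "{c - h..c + h} \<subseteq> T -` {T c - e * h..T c + e * h} \<inter> {0..1}"
  proof
    fix u assume u: "u \<in> {c - h..c + h}"
    with bound[OF u] h(3) show "u \<in> T -` {T c - e * h..T c + e * h} \<inter> {0..1}"
      by (auto simp: abs_le_iff)
  qed
  then have "emeasure lborel {c - h..c + h} \<le> emeasure lborel (T -` {T c - e * h..T c + e * h} \<inter> {0..1})"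
    using udp_preimage_borel[OF udp] by (intro emeasure_mono) auto
  also have "\<dots> \<le> emeasure lborel {T c - e * h..T c + e * h}"
    by (simp add: udp_emeasure_preimage[OF udp] emeasure_mono)
  finally have "2 * h \<le> 2 * (e * h)" using h(1) e by (simp add: ennreal_le_iff)
  then show False using h(1) e(2) by simp
qed

lemma inj_on_if_deriv_nonzero:
  fixes f :: "real \<Rightarrow> real"
  assumes S: "is_interval S"
    and f': "\<And>u. u \<in> S \<Longrightarrow> (f has_real_derivative f' u) (at u)"
    and nz: "\<And>u. u \<in> S \<Longrightarrow> f' u \<noteq> 0"
  shows "inj_on f S"
proof -
  have neq: "f u \<noteq> f v" if "u \<in> S" "v \<in> S" "u < v" for u v
  proof
    assume "f u = f v"
    have uv: "{u..v} \<subseteq> S" using S that unfolding is_interval_1 by (meson atLeastAtMost_iff subsetI)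
    have der: "(f has_real_derivative f' x) (at x)" if "x \<in> {u..v}" for x
      using f' uv that by blast
    then have "continuous_on {u..v} f"
      by (intro continuous_at_imp_continuous_on ballI DERIV_isCont)
    moreover have "f differentiable (at x)" if "u < x" "x < v" for x
      using der[of x] that unfolding real_differentiable_def by auto
    ultimately obtain w where w: "u < w" "w < v" "(f has_real_derivative 0) (at w)"
      using Rolle[OF \<open>u < v\<close> \<open>f u = f v\<close>] by blast
    then have "w \<in> S" using uv by auto
    then show False using DERIV_unique[OF f' w(3)] nz by blast
  qed
  show ?thesis
  proof (rule inj_onI)
    fix u v assume "u \<in> S" "v \<in> S" "f u = f v"
    then show "u = v" using neq[of u v] neq[of v u] by (cases u v rule: linorder_cases) auto
  qed
qed

section \<open>The distribution function \<open>G\<^sub>x\<close>\<close>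

lemma stoch_G_nonneg: "0 \<le> stoch_G T A x t"
  unfolding stoch_G_def by (simp add: sum_nonneg)

lemma stoch_G_eq_discrete_cdf:
  "stoch_G T A x t = discrete_cdf {u\<in>A. T u = x} (\<lambda>r. 1 / \<bar>deriv T r\<bar>) t"
  unfolding stoch_G_def discrete_cdf_def by (rule sum.cong) auto

lemma stoch_inv_eq_discrete_quantile:
  "stoch_inv T A x z =
     (if x \<in> T ` A then discrete_quantile {u\<in>A. T u = x} (\<lambda>r. 1 / \<bar>deriv T r\<bar>) z else 0)"
  unfolding stoch_inv_def discrete_quantile_def stoch_G_eq_discrete_cdf ..

lemma stoch_G_inj_on:
  assumes "inj_on T S"
  shows "stoch_G T S x t =
    (if x \<in> T ` (S \<inter> {..t}) then 1 / \<bar>deriv T (the_inv_into S T x)\<bar> else 0)"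
proof (cases "x \<in> T ` (S \<inter> {..t})")
  case True
  then obtain r where r: "r \<in> S" "r \<le> t" "T r = x" by auto
  then have "{u\<in>S. T u = x \<and> u \<le> t} = {r}" using assms by (auto dest: inj_onD)
  then show ?thesis using True r assms by (simp add: stoch_G_def the_inv_into_f_eq)
next
  case False
  then have "{u\<in>S. T u = x \<and> u \<le> t} = {}" by auto
  then show ?thesis unfolding stoch_G_def using False by (simp only: sum.empty if_False)
qed

lemma stoch_G_UN:
  assumes "finite I" "disjoint_family_on S I" "\<And>i. i \<in> I \<Longrightarrow> finite {u\<in>S i. T u = x}"
  shows "stoch_G T (\<Union>i\<in>I. S i) x t = (\<Sum>i\<in>I. stoch_G T (S i) x t)"
proof -
  have roots: "{u\<in>(\<Union>i\<in>I. S i). T u = x \<and> u \<le> t} = (\<Union>i\<in>I. {u\<in>S i. T u = x \<and> u \<le> t})"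
    by auto
  have "finite {u\<in>S i. T u = x \<and> u \<le> t}" if "i \<in> I" for i
    using assms(3)[OF that] by (rule rev_finite_subset) auto
  then show ?thesis unfolding stoch_G_def roots
    by (intro sum.UNION_disjoint) (use assms(1,2) in \<open>auto simp: disjoint_family_on_def\<close>)
qed

lemma is_interval_continuous_image:
  fixes f :: "real \<Rightarrow> real"
  shows "is_interval S \<Longrightarrow> continuous_on S f \<Longrightarrow> is_interval (f ` S)"
  by (meson connected_continuous_image is_interval_connected is_interval_connected_1)

lemma borel_measurable_the_inv_into:
  fixes T :: "real \<Rightarrow> real"
  assumes S: "is_interval S" and T: "continuous_on S T" "inj_on T S"
  shows "the_inv_into S T \<in> borel_measurable (restrict_space borel (T ` S))"
proof (rule borel_measurable_iff_le[THEN iffD2], intro allI)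
  fix s
  have "{x \<in> T ` S. the_inv_into S T x \<le> s} = T ` (S \<inter> {..s})"
    using T(2) by (auto simp: the_inv_into_f_f)
  moreover have "is_interval (T ` S)" "is_interval (T ` (S \<inter> {..s}))"
    using S T(1) continuous_on_subset[OF T(1), of "S \<inter> {..s}"]
    by (auto intro!: is_interval_continuous_image is_interval_Int is_interval_ic)
  ultimately show "{x \<in> space (restrict_space borel (T ` S)). the_inv_into S T x \<le> s}
      \<in> sets (restrict_space borel (T ` S))"
    by (auto simp: space_restrict_space sets_restrict_space_iff real_interval_borel_measurable)
qed

lemma borel_measurable_stoch_G_interval:
  fixes T :: "real \<Rightarrow> real"
  assumes S: "is_interval S" and T': "\<And>u. u \<in> S \<Longrightarrow> (T has_real_derivative deriv T u) (at u)"
    and cont: "continuous_on S (deriv T)" and inj: "inj_on T S"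
  shows "(\<lambda>x. stoch_G T S x t) \<in> borel_measurable borel"
proof -
  have T_cont: "continuous_on S T"
    using T' by (intro continuous_at_imp_continuous_on ballI DERIV_isCont) blast
  have image_sets: "T ` S' \<in> sets borel" if "S' \<subseteq> S" "is_interval S'" for S'
    using that continuous_on_subset[OF T_cont]
    by (blast intro: real_interval_borel_measurable is_interval_continuous_image)
  have "(\<lambda>u. 1 / \<bar>deriv T u\<bar>) \<in> borel_measurable (restrict_space borel S)"
    using borel_measurable_continuous_on_restrict[OF cont] by measurable
  moreover have "the_inv_into S T \<in> restrict_space borel (T ` S) \<rightarrow>\<^sub>M restrict_space borel S"
    using borel_measurable_the_inv_into[OF S T_cont inj] inj
    by (intro measurable_restrict_space2) (auto simp: space_restrict_space the_inv_into_into)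
  ultimately have "(\<lambda>x. 1 / \<bar>deriv T (the_inv_into S T x)\<bar>) \<in> borel_measurable (restrict_space borel (T ` S))"
    using measurable_comp unfolding comp_def by blast
  moreover define g where "g = (\<lambda>x. indicator (T ` S) x * (1 / \<bar>deriv T (the_inv_into S T x)\<bar>))"
  ultimately have [measurable]: "g \<in> borel_measurable borel"
    using image_sets[of S] S by (simp add: borel_measurable_restrict_space_iff)
  have [measurable]: "T ` (S \<inter> {..t}) \<in> sets borel"
    using S by (intro image_sets) (auto intro: is_interval_Int is_interval_ic)
  have "stoch_G T S x t = indicator (T ` (S \<inter> {..t})) x * g x" for x
  proof (cases "x \<in> T ` (S \<inter> {..t})")
    case True
    then have "x \<in> T ` S" by blast
    with True show ?thesis by (simp add: stoch_G_inj_on[OF inj] g_def)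
  qed (simp add: stoch_G_inj_on[OF inj])
  then show ?thesis by simp
qed

lemma has_integral_stoch_G_inj_on:
  fixes T :: "real \<Rightarrow> real"
  assumes S: "S \<in> sets borel" "emeasure lborel S < \<infinity>" "S \<subseteq> {..t}"
    and T': "\<And>u. u \<in> S \<Longrightarrow> (T has_real_derivative deriv T u) (at u)"
    and nz: "\<And>u. u \<in> S \<Longrightarrow> deriv T u \<noteq> 0" and inj: "inj_on T S"
    and B: "S \<inter> T -` B \<in> sets borel"
  shows "((\<lambda>x. indicator B x * stoch_G T S x t) has_integral measure lborel (S \<inter> T -` B)) (T ` S)"
proof -
  define f where "f = (\<lambda>x. indicator B x * stoch_G T S x t)"
  define b where "b = measure lborel (S \<inter> T -` B)"
  have "emeasure lborel (S \<inter> T -` B) < \<infinity>"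
    using emeasure_mono[of "S \<inter> T -` B" S lborel] S by (auto intro: le_less_trans)
  then have "((\<lambda>_. 1::real) has_integral b) (T -` B \<inter> S)"
    using has_integral_measure_lborel[OF B] unfolding b_def by (simp add: Int_commute)
  then have ind: "((\<lambda>u. if u \<in> T -` B then 1 else 0) has_integral b) S"
    by (simp only: has_integral_restrict_Int)
  have f_T: "(if u \<in> T -` B then 1 else 0) = \<bar>deriv T u\<bar> * f (T u)" if "u \<in> S" for u
  proof -
    have "T u \<in> T ` (S \<inter> {..t})" using that S(3) by auto
    then have "stoch_G T S (T u) t = 1 / \<bar>deriv T u\<bar>"
      using that inj by (simp add: stoch_G_inj_on the_inv_into_f_f)
    then show ?thesis using nz[OF that] by (simp add: f_def indicator_def)
  qed
  have int: "((\<lambda>u. \<bar>deriv T u\<bar> * f (T u)) has_integral b) S"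
    by (rule has_integral_eq[OF f_T ind])
  have "(\<lambda>u. \<bar>deriv T u\<bar> * f (T u)) absolutely_integrable_on S"
    by (rule nonnegative_absolutely_integrable_1[OF has_integral_integrable[OF int]])
      (simp add: f_def stoch_G_nonneg)
  with int have abs_int: "(\<lambda>u. \<bar>deriv T u\<bar> * f (T u)) absolutely_integrable_on S
      \<and> integral S (\<lambda>u. \<bar>deriv T u\<bar> * f (T u)) = b"
    by (simp add: integral_unique)
  have leb: "S \<in> sets lebesgue" using S(1) by (simp add: sets_completionI_sets)
  have der: "(T has_field_derivative deriv T u) (at u within S)" if "u \<in> S" for u
    using T'[OF that] by (rule has_field_derivative_at_within)
  have "f absolutely_integrable_on T ` S \<and> integral (T ` S) f = b"
    by (rule has_absolute_integral_change_of_variables_1'[THEN iffD1, OF leb der inj abs_int])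
  then have "(f has_integral b) (T ` S)"
    using integrable_integral set_lebesgue_integral_eq_integral(1) by fastforce
  then show ?thesis unfolding f_def b_def .
qed

lemma nn_integral_stoch_G_inj_on:
  fixes T :: "real \<Rightarrow> real"
  assumes S: "S \<in> sets borel" "emeasure lborel S < \<infinity>" "S \<subseteq> {..t}"
    and T': "\<And>u. u \<in> S \<Longrightarrow> (T has_real_derivative deriv T u) (at u)"
    and nz: "\<And>u. u \<in> S \<Longrightarrow> deriv T u \<noteq> 0" and inj: "inj_on T S"
    and B: "S \<inter> T -` B \<in> sets borel"
  shows "(\<integral>\<^sup>+x. ennreal (indicator B x * stoch_G T S x t) \<partial>lborel) = emeasure lborel (S \<inter> T -` B)"
proof -
  have "emeasure lborel (S \<inter> T -` B) < \<infinity>"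
    using emeasure_mono[of "S \<inter> T -` B" S lborel] S by (auto intro: le_less_trans)
  then have "emeasure lborel (S \<inter> T -` B) = ennreal (measure lborel (S \<inter> T -` B))"
    by (simp add: emeasure_eq_ennreal_measure)
  also have "\<dots> = (\<integral>\<^sup>+x. ennreal (indicator B x * stoch_G T S x t) * indicator (T ` S) x \<partial>lborel)"
    by (rule nn_integral_has_integral_lebesgue'[symmetric, OF _ has_integral_stoch_G_inj_on[OF assms]])
      (simp add: stoch_G_nonneg)
  also have "\<dots> = (\<integral>\<^sup>+x. ennreal (indicator B x * stoch_G T S x t) \<partial>lborel)"
  proof -
    have "ennreal (indicator B x * stoch_G T S x t) * indicator (T ` S) x
        = ennreal (indicator B x * stoch_G T S x t)" for x
      by (cases "x \<in> T ` S") (auto simp: stoch_G_inj_on[OF inj])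
    then show ?thesis by simp
  qed
  finally show ?thesis ..
qed

section \<open>Regular uniform-distribution-preserving maps\<close>

locale regular_udp =
  fixes T :: "real \<Rightarrow> real" and a :: "nat \<Rightarrow> real" and L :: nat
  assumes udp: "udp T" and regular: "regular_partition T a L"
begin

abbreviation A :: "real set" where "A \<equiv> part_set a L"

abbreviation piece :: "nat \<Rightarrow> real set" where "piece l \<equiv> {a l<..<a (Suc l)}"

lemma partition_strict_mono: "i < j \<Longrightarrow> j \<le> L \<Longrightarrow> a i < a j"
proof (induction j)
  case (Suc j)
  have "a j < a (Suc j)" using regular Suc.prems unfolding regular_partition_def by auto
  with Suc show ?case by (cases "i = j") auto
qed simp

lemma partition_bounds: "l \<le> L \<Longrightarrow> a l \<in> {0..1}"
  using partition_strict_mono[of 0 l] partition_strict_mono[of l L] regular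
  unfolding regular_partition_def by (cases "l = 0"; cases "l = L") auto

lemma piece_subset: "l < L \<Longrightarrow> piece l \<subseteq> {0<..<1}"
  using partition_bounds[of l] partition_bounds[of "Suc l"] by auto

lemma A_eq: "A = (\<Union>l<L. piece l)"
  unfolding part_set_def ..

lemma A_subset: "A \<subseteq> {0<..<1}"
  using piece_subset unfolding A_eq by blast

lemma disjoint_pieces: "disjoint_family_on piece {..<L}"
proof -
  have "piece i \<inter> piece j = {}" if "i < j" "j < L" for i j
    using partition_strict_mono[of "Suc i" j] that by (cases "Suc i = j") auto
  then show ?thesis unfolding disjoint_family_on_def by (metis Int_commute lessThan_iff linorder_neqE_nat)
qed

lemma A_cover: "{0..1} - a ` {..L} \<subseteq> A"
proof
  fix x assume x: "x \<in> {0..1} - a ` {..L}"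
  define l where "l = Max {l. l \<le> L \<and> a l < x}"
  have "a 0 = 0" "a L = 1" using regular unfolding regular_partition_def by auto
  with x have "0 \<in> {l. l \<le> L \<and> a l < x}" by (force simp: image_iff)
  moreover have fin: "finite {l. l \<le> L \<and> a l < x}" by simp
  ultimately have "l \<in> {l. l \<le> L \<and> a l < x}" unfolding l_def by (intro Max_in) auto
  then have l: "l \<le> L" "a l < x" by auto
  have l_max: "k \<le> l" if "k \<le> L" "a k < x" for k
    unfolding l_def using fin that by (simp add: Max_ge)
  have "l \<noteq> L" using l \<open>a L = 1\<close> x by auto
  then have "x < a (Suc l)"
    using l_max[of "Suc l"] l x by (force simp: image_iff not_less order_le_less)
  then show "x \<in> A" unfolding A_eq using l \<open>l \<noteq> L\<close> by auto
qed

lemma piece_deriv: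
  assumes "l < L"
  shows "continuous_on (piece l) (deriv T)"
    and "\<And>u. u \<in> piece l \<Longrightarrow> (T has_real_derivative deriv T u) (at u)"
proof -
  obtain T' where cont: "continuous_on (piece l) T'"
    and T': "\<And>u. u \<in> piece l \<Longrightarrow> (T has_real_derivative T' u) (at u)"
    using regular assms unfolding regular_partition_def by blast
  have eq: "\<And>u. u \<in> piece l \<Longrightarrow> deriv T u = T' u" by (rule DERIV_imp_deriv[OF T'])
  show "continuous_on (piece l) (deriv T)"
    using cont by (rule continuous_on_eq) (simp add: eq)
  show "\<And>u. u \<in> piece l \<Longrightarrow> (T has_real_derivative deriv T u) (at u)"
    using T' eq by simp
qed

lemma A_deriv: "u \<in> A \<Longrightarrow> (T has_real_derivative deriv T u) (at u)"
  using piece_deriv(2) unfolding A_eq by blast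

lemma abs_deriv_ge_1: "u \<in> A \<Longrightarrow> 1 \<le> \<bar>deriv T u\<bar>"
  using udp_abs_deriv_ge_1[OF udp _ A_deriv] A_subset by blast

lemma inverse_abs_deriv_pos: "u \<in> A \<Longrightarrow> 0 < 1 / \<bar>deriv T u\<bar>"
  using abs_deriv_ge_1[of u] by simp

lemma inj_on_piece: "l < L \<Longrightarrow> inj_on T (piece l)"
  using abs_deriv_ge_1 piece_deriv(2) unfolding A_eq
  by (intro inj_on_if_deriv_nonzero[where f' = "deriv T"] is_interval_oo) fastforce+

lemma finite_roots_piece: "l < L \<Longrightarrow> finite {u\<in>piece l. T u = x}"
  using finite_vimage_IntI[of "{x}" T "piece l"] inj_on_piece by (simp add: vimage_def Int_def conj_commute)

lemma finite_roots: "finite {u\<in>A. T u = x}"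
proof -
  have "{u\<in>A. T u = x} = (\<Union>l<L. {u\<in>piece l. T u = x})" unfolding A_eq by blast
  then show ?thesis using finite_roots_piece by simp
qed

lemma stoch_G_eq_sum_pieces: "stoch_G T A x t = (\<Sum>l<L. stoch_G T (piece l) x t)"
  unfolding A_eq by (intro stoch_G_UN finite_lessThan disjoint_pieces finite_roots_piece) simp

lemma borel_measurable_stoch_G_piece: "l < L \<Longrightarrow> (\<lambda>x. stoch_G T (piece l) x t) \<in> borel_measurable borel"
  by (intro borel_measurable_stoch_G_interval is_interval_oo piece_deriv inj_on_piece)

lemma borel_measurable_stoch_G: "(\<lambda>x. stoch_G T A x t) \<in> borel_measurable borel"
  unfolding stoch_G_eq_sum_pieces by (intro borel_measurable_sum borel_measurable_stoch_G_piece) simp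

lemma image_A_borel: "T ` A \<in> sets borel"
proof -
  have "T ` piece l \<in> sets borel" if "l < L" for l
  proof -
    have "continuous_on (piece l) T"
      using piece_deriv(2)[OF that] by (intro continuous_at_imp_continuous_on ballI DERIV_isCont) blast
    then show ?thesis by (intro real_interval_borel_measurable is_interval_continuous_image is_interval_oo)
  qed
  then show ?thesis unfolding A_eq image_UN by blast
qed

lemma piece_preimage_borel: "l < L \<Longrightarrow> B \<in> sets borel \<Longrightarrow> piece l \<inter> T -` B \<in> sets borel"
proof -
  assume "l < L" "B \<in> sets borel"
  moreover from \<open>l < L\<close> have "piece l \<inter> T -` B = piece l \<inter> (T -` B \<inter> {0..1})"
    using piece_subset[OF \<open>l < L\<close>] by auto
  ultimately show ?thesis using udp_preimage_borel[OF udp] by simp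
qed

lemma emeasure_A_preimage:
  assumes B: "B \<in> sets borel"
  shows "emeasure lborel (A \<inter> T -` B) = emeasure lborel (B \<inter> {0..1})"
proof -
  have "A \<inter> T -` B = (\<Union>l<L. piece l \<inter> T -` B)" unfolding A_eq by blast
  then have "A \<inter> T -` B \<in> sets borel"
    using piece_preimage_borel[OF _ B] by (simp only:) (intro sets.finite_UN; simp)
  moreover have "AE x in lborel. x \<notin> a ` {..L}"
    by (intro AE_not_in countable_imp_null_set_lborel) auto
  then have "AE x in lborel. x \<in> A \<inter> T -` B \<longleftrightarrow> x \<in> T -` B \<inter> {0..1}"
    by eventually_elim (use A_subset A_cover in auto)
  ultimately have "emeasure lborel (A \<inter> T -` B) = emeasure lborel (T -` B \<inter> {0..1})"
    using udp_preimage_borel[OF udp B] by (intro emeasure_eq_AE) simp_all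
  also have "\<dots> = emeasure lborel (B \<inter> {0..1})"
    by (rule udp_emeasure_preimage[OF udp B])
  finally show ?thesis .
qed

lemma nn_integral_stoch_G:
  assumes B: "B \<in> sets borel"
  shows "(\<integral>\<^sup>+x. ennreal (indicator B x * stoch_G T A x 1) \<partial>lborel) = emeasure lborel (B \<inter> {0..1})"
proof -
  have "(\<integral>\<^sup>+x. ennreal (indicator B x * stoch_G T A x 1) \<partial>lborel)
      = (\<Sum>l<L. \<integral>\<^sup>+x. ennreal (indicator B x * stoch_G T (piece l) x 1) \<partial>lborel)"
    unfolding stoch_G_eq_sum_pieces sum_distrib_left
    using borel_measurable_stoch_G_piece B
    by (subst nn_integral_sum[symmetric]) (auto simp: stoch_G_nonneg sum_nonneg intro!: nn_integral_cong)
  also have "\<dots> = (\<Sum>l<L. emeasure lborel (piece l \<inter> T -` B))"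
  proof (rule sum.cong[OF refl])
    fix l assume "l \<in> {..<L}"
    then have l: "l < L" by simp
    have "piece l \<subseteq> {..1}" using piece_subset[OF l] by auto
    moreover have "deriv T u \<noteq> 0" if "u \<in> piece l" for u
      using abs_deriv_ge_1[of u] that l unfolding A_eq by fastforce
    ultimately show "(\<integral>\<^sup>+x. ennreal (indicator B x * stoch_G T (piece l) x 1) \<partial>lborel)
        = emeasure lborel (piece l \<inter> T -` B)"
      using l partition_strict_mono[of l "Suc l"] piece_preimage_borel[OF l B]
      by (intro nn_integral_stoch_G_inj_on piece_deriv inj_on_piece) auto
  qed
  also have "\<dots> = emeasure lborel (\<Union>l<L. piece l \<inter> T -` B)"
  proof (rule sum_emeasure)
    show "disjoint_family_on (\<lambda>l. piece l \<inter> T -` B) {..<L}"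
      using disjoint_pieces by (rule disjoint_family_on_bisimulation) blast
  qed (use piece_preimage_borel[OF _ B] in auto)
  also have "(\<Union>l<L. piece l \<inter> T -` B) = A \<inter> T -` B" unfolding A_eq by blast
  finally show ?thesis using emeasure_A_preimage[OF B] by simp
qed

lemma AE_stoch_G_eq_1: "AE x in lborel. x \<in> {0..1} \<longrightarrow> stoch_G T A x 1 = 1"
proof -
  note [measurable] = borel_measurable_stoch_G
  have "density lborel (\<lambda>x. ennreal (stoch_G T A x 1)) = density lborel (indicator {0..1})"
  proof (rule measure_eqI)
    fix B assume "B \<in> sets (density lborel (\<lambda>x. ennreal (stoch_G T A x 1)))"
    then have B[measurable]: "B \<in> sets borel" by simp
    have "emeasure (density lborel (\<lambda>x. ennreal (stoch_G T A x 1))) B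
        = (\<integral>\<^sup>+x. ennreal (stoch_G T A x 1) * indicator B x \<partial>lborel)"
      by (rule emeasure_density) auto
    also have "\<dots> = (\<integral>\<^sup>+x. ennreal (indicator B x * stoch_G T A x 1) \<partial>lborel)"
      by (intro nn_integral_cong) (simp add: indicator_def)
    also have "\<dots> = emeasure lborel (B \<inter> {0..1})" by (rule nn_integral_stoch_G[OF B])
    also have "\<dots> = (\<integral>\<^sup>+x. indicator {0..1} x * indicator B x \<partial>lborel)"
      by (simp add: Int_commute flip: nn_integral_indicator indicator_inter_arith)
    also have "\<dots> = emeasure (density lborel (indicator {0..1})) B"
      by (rule emeasure_density[symmetric]) auto
    finally show "emeasure (density lborel (\<lambda>x. ennreal (stoch_G T A x 1))) B
        = emeasure (density lborel (indicator {0..1})) B" .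
  qed simp
  then have "AE x in lborel. ennreal (stoch_G T A x 1) = indicator {0..1} x"
    by (intro sigma_finite_measure.density_unique[OF sigma_finite_lborel]) auto
  then show ?thesis by eventually_elim (auto simp: indicator_def)
qed

lemma stoch_G_1_eq_sum: "stoch_G T A x 1 = (\<Sum>r\<in>{u\<in>A. T u = x}. 1 / \<bar>deriv T r\<bar>)"
  using A_subset unfolding stoch_G_def by (intro sum.cong) auto

text \<open>Levels \<open>z\<close> outside \<open>(0, G\<^sub>x(1)]\<close> give the junk values \<open>Inf UNIV\<close> and \<open>Inf {}\<close>.\<close>
lemma stoch_inv_le_iff:
  "stoch_inv T A x z \<le> s \<longleftrightarrow>
     (x \<notin> T ` A \<and> 0 \<le> s)
   \<or> (x \<in> T ` A \<and> z \<le> 0 \<and> Inf (UNIV :: real set) \<le> s)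
   \<or> (x \<in> T ` A \<and> stoch_G T A x 1 < z \<and> Inf ({} :: real set) \<le> s)
   \<or> (x \<in> T ` A \<and> 0 < z \<and> z \<le> stoch_G T A x 1 \<and> z \<le> stoch_G T A x s)"
proof (cases "x \<in> T ` A")
  case True
  define R where "R = {u\<in>A. T u = x}"
  define m where "m r = 1 / \<bar>deriv T r\<bar>" for r
  have fin: "finite R" unfolding R_def by (rule finite_roots)
  have pos: "0 < m r" if "r \<in> R" for r
    using inverse_abs_deriv_pos that unfolding R_def m_def by blast
  have G: "stoch_G T A x t = discrete_cdf R m t" for t
    unfolding R_def m_def by (rule stoch_G_eq_discrete_cdf)
  have total: "stoch_G T A x 1 = sum m R"
    unfolding R_def m_def by (rule stoch_G_1_eq_sum)
  have inv: "stoch_inv T A x z = discrete_quantile R m z"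
    using True unfolding R_def m_def by (simp add: stoch_inv_eq_discrete_quantile)
  have bounds: "0 \<le> discrete_cdf R m t" "discrete_cdf R m t \<le> sum m R" for t
    using fin pos by (auto intro: discrete_cdf_nonneg discrete_cdf_le_sum less_imp_le)
  consider "z \<le> 0" | "sum m R < z" | "0 < z" "z \<le> sum m R" by linarith
  then show ?thesis
  proof cases
    case 1
    then have "{t. z \<le> discrete_cdf R m t} = UNIV" using bounds(1) by (auto intro: order_trans)
    with 1 show ?thesis using True bounds(1)[of 0] bounds(2)[of 0]
      by (simp add: inv total discrete_quantile_def)
  next
    case 2
    then have "{t. z \<le> discrete_cdf R m t} = {}" using bounds(2) by (auto simp: not_le intro: le_less_trans)
    with 2 show ?thesis using True bounds(1)[of 0] bounds(2)[of 0]
      by (simp add: inv total discrete_quantile_def)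
  next
    case 3
    with discrete_quantile_le_iff[of R m z s] fin pos True show ?thesis
      by (simp add: inv G total[unfolded G])
  qed
qed (simp add: stoch_inv_def)

lemma borel_measurable_stoch_inv [measurable]:
  "case_prod (stoch_inv T A) \<in> borel_measurable (borel \<Otimes>\<^sub>M borel)"
proof (rule borel_measurable_iff_le[THEN iffD2], intro allI)
  fix s
  note [measurable] = borel_measurable_stoch_G image_A_borel
  show "{p \<in> space (borel \<Otimes>\<^sub>M borel). case_prod (stoch_inv T A) p \<le> s} \<in> sets (borel \<Otimes>\<^sub>M borel)"
    unfolding case_prod_beta stoch_inv_le_iff by measurable
qed

lemma deriv_reflect:
  assumes sym: "symmetric_half T" and u: "u \<in> A"
  shows "deriv T (1 - u) = - deriv T u"
proof -
  have "(T has_real_derivative deriv T u) (at (1 - (1 - u)))" using A_deriv[OF u] by simp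
  moreover have "((\<lambda>v. 1 - v) has_real_derivative - 1) (at (1 - u))"
    by (auto intro!: derivative_eq_intros)
  ultimately have chain: "((\<lambda>v. T (1 - v)) has_real_derivative deriv T u * - 1) (at (1 - u))"
    by (rule DERIV_chain2)
  have mem: "1 - u \<in> {0<..<1}" using A_subset u by auto
  have eq: "T (1 - v) = T v" if "v \<in> {0<..<1}" for v
    using sym that unfolding symmetric_half_def by simp
  have "(T has_real_derivative deriv T u * - 1) (at (1 - u))"
    by (rule has_field_derivative_transform_within_open[OF chain open_greaterThanLessThan mem eq])
  then show ?thesis by (simp add: DERIV_imp_deriv)
qed

lemma roots_reflect:
  assumes sym: "symmetric_half T" and x: "x \<notin> T ` a ` {..L}" and r: "r \<in> A" "T r = x"
  shows "1 - r \<in> A \<and> T (1 - r) = x"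
proof -
  have r01: "r \<in> {0<..<1}" using A_subset r(1) by blast
  then have "T (1 - r) = x" using sym r(2) unfolding symmetric_half_def by simp
  moreover from this have "1 - r \<notin> a ` {..L}" using x by blast
  ultimately show ?thesis using A_cover r01 by auto
qed

lemma stoch_inv_reflect:
  assumes sym: "symmetric_half T" and x: "x \<notin> T ` a ` {..L}" "stoch_G T A x 1 = 1"
    and z: "z \<in> {0<..<1}" "z \<notin> (\<lambda>r. stoch_G T A x r) ` {u\<in>A. T u = x}"
  shows "stoch_inv T A x (1 - z) = 1 - stoch_inv T A x z"
proof -
  define R where "R = {u\<in>A. T u = x}"
  define m where "m r = 1 / \<bar>deriv T r\<bar>" for r
  have total: "sum m R = 1" using x(2) unfolding R_def m_def stoch_G_1_eq_sum .
  then have "R \<noteq> {}" by auto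
  then have "x \<in> T ` A" unfolding R_def by auto
  have "discrete_quantile R m (1 - z) = 1 - discrete_quantile R m z"
  proof (rule discrete_quantile_reflect[OF _ _ total])
    show "finite R" unfolding R_def by (rule finite_roots)
    show "0 < m r" if "r \<in> R" for r
      using inverse_abs_deriv_pos that unfolding R_def m_def by blast
    show "1 - r \<in> R \<and> m (1 - r) = m r" if "r \<in> R" for r
      using roots_reflect[OF sym x(1)] deriv_reflect[OF sym] that unfolding R_def m_def by auto
    show "z \<notin> discrete_cdf R m ` R"
      using z(2) unfolding R_def m_def stoch_G_eq_discrete_cdf .
  qed (use z(1) in auto)
  then show ?thesis
    using \<open>x \<in> T ` A\<close> unfolding stoch_inv_eq_discrete_quantile R_def m_def by simp
qed

text \<open>The exceptional \<open>x\<close> are the images of the partition points and those whose weights do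
  not sum to one; for each other \<open>x\<close>, only finitely many levels \<open>z\<close> are exceptional.\<close>
lemma AE_stoch_inv_reflect:
  assumes sym: "symmetric_half T"
  shows "AE p in unif01 \<Otimes>\<^sub>M unif01.
    stoch_inv T A (fst p) (1 - snd p) = 1 - stoch_inv T A (fst p) (snd p)"
proof -
  have nested: "AE x in unif01. AE z in unif01. stoch_inv T A x (1 - z) = 1 - stoch_inv T A x z"
  proof -
    have "AE x in lborel. x \<notin> T ` a ` {..L}"
      by (intro AE_not_in countable_imp_null_set_lborel) auto
    with AE_stoch_G_eq_1 have "AE x in unif01. x \<notin> T ` a ` {..L} \<and> stoch_G T A x 1 = 1"
      by (intro AE_unif01I) (auto elim: AE_mp)
    then show ?thesis
    proof eventually_elim
      case (elim x)
      have "AE z in lborel. z \<notin> {0, 1} \<union> (\<lambda>r. stoch_G T A x r) ` {u\<in>A. T u = x}"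
        using finite_roots by (intro AE_not_in countable_imp_null_set_lborel countable_finite) auto
      then have "AE z in lborel. z \<in> {0..1} \<longrightarrow> stoch_inv T A x (1 - z) = 1 - stoch_inv T A x z"
        by eventually_elim (use elim in \<open>auto intro: stoch_inv_reflect[OF sym]\<close>)
      then show ?case by (rule AE_unif01I)
    qed
  qed
  interpret pair_sigma_finite unif01 unif01
    by (intro pair_sigma_finite.intro prob_space_imp_sigma_finite prob_space_unif01)
  show ?thesis
    by (rule AE_pair_measure[where
          P = "\<lambda>p. stoch_inv T A (fst p) (1 - snd p) = 1 - stoch_inv T A (fst p) (snd p)"])
      (measurable, use nested in simp)
qed

end

section \<open>Reflection invariance of the joint law\<close>

lemma distr_swap_eq:
  fixes f g f' g' :: "'a \<Rightarrow> real"
  assumes [measurable]: "f \<in> borel_measurable M" "g \<in> borel_measurable M"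
    "f' \<in> borel_measurable M" "g' \<in> borel_measurable M"
    and eq: "distr M borel (\<lambda>\<omega>. (f \<omega>, g \<omega>)) = distr M borel (\<lambda>\<omega>. (f' \<omega>, g' \<omega>))"
  shows "distr M borel (\<lambda>\<omega>. (g \<omega>, f \<omega>)) = distr M borel (\<lambda>\<omega>. (g' \<omega>, f' \<omega>))"
proof -
  have [measurable]: "(\<lambda>p::real \<times> real. (snd p, fst p)) \<in> borel \<rightarrow>\<^sub>M borel"
    unfolding borel_prod[symmetric] by measurable
  have "distr M borel (\<lambda>\<omega>. (g \<omega>, f \<omega>))
      = distr (distr M borel (\<lambda>\<omega>. (f \<omega>, g \<omega>))) borel (\<lambda>p. (snd p, fst p))"
    unfolding borel_prod[symmetric] by (subst distr_distr) (auto simp: comp_def)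
  also have "\<dots> = distr M borel (\<lambda>\<omega>. (g' \<omega>, f' \<omega>))"
    unfolding eq unfolding borel_prod[symmetric] by (subst distr_distr) (auto simp: comp_def)
  finally show ?thesis .
qed

context prob_space
begin

lemma indep_set_sym:
  assumes "indep_set A B"
  shows "indep_set B A"
proof (rule indep_setI)
  show "B \<subseteq> events" "A \<subseteq> events"
    using indep_setD_ev1[OF assms] indep_setD_ev2[OF assms] by simp_all
  fix b a assume "b \<in> B" "a \<in> A"
  with indep_setD[OF assms] show "prob (b \<inter> a) = prob b * prob a"
    by (simp only: Int_commute[of b a] mult.commute[of "prob b"])
qed

lemma indep_var_sym: "indep_var S X T Y \<Longrightarrow> indep_var T Y S X"
  unfolding indep_var_eq using indep_set_sym by blast

lemma distr_pair_eq_if_indep: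
  fixes X X' Y Y' :: "'a \<Rightarrow> 'b :: second_countable_topology"
  assumes "indep_var borel X borel Y" "indep_var borel X' borel Y'"
    and "distr M borel X = distr M borel X'" "distr M borel Y = distr M borel Y'"
  shows "distr M borel (\<lambda>\<omega>. (X \<omega>, Y \<omega>)) = distr M borel (\<lambda>\<omega>. (X' \<omega>, Y' \<omega>))"
  using assms by (simp add: indep_var_distribution_eq borel_prod)

lemma distr_reflect_indep_unif01:
  fixes Z W :: "'a \<Rightarrow> real"
  assumes Z: "distr M borel Z = unif01" and ZW: "indep_var borel Z borel W"
  shows "distr M borel (\<lambda>\<omega>. (1 - Z \<omega>, W \<omega>)) = distr M borel (\<lambda>\<omega>. (Z \<omega>, W \<omega>))"
proof (rule distr_pair_eq_if_indep)
  have [measurable]: "Z \<in> borel_measurable M" using ZW by (simp add: indep_var_distribution_eq)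
  show "indep_var borel (\<lambda>\<omega>. 1 - Z \<omega>) borel W"
    using indep_var_compose[OF ZW, of "\<lambda>z. 1 - z" borel id] by (simp add: comp_def)
  show "distr M borel (\<lambda>\<omega>. 1 - Z \<omega>) = distr M borel Z"
    using distr_distr[of "\<lambda>x. 1 - x" borel borel Z M] Z by (simp add: comp_def distr_unif01_reflect)
qed (use ZW in simp_all)

lemma AE_indep_unif01_pair:
  fixes X Z :: "'a \<Rightarrow> real"
  assumes "distr M borel X = unif01" "distr M borel Z = unif01" "indep_var borel X borel Z"
    and "AE p in unif01 \<Otimes>\<^sub>M unif01. P p"
  shows "AE \<omega> in M. P (X \<omega>, Z \<omega>)"
proof (rule AE_distrD[of "\<lambda>\<omega>. (X \<omega>, Z \<omega>)" M borel P])
  have [measurable]: "X \<in> borel_measurable M" "Z \<in> borel_measurable M"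
    using assms(3) by (simp_all add: indep_var_distribution_eq)
  show "(\<lambda>\<omega>. (X \<omega>, Z \<omega>)) \<in> M \<rightarrow>\<^sub>M borel"
    unfolding borel_prod[symmetric] by measurable
  have XZ: "distr M borel (\<lambda>\<omega>. (X \<omega>, Z \<omega>)) = unif01 \<Otimes>\<^sub>M unif01"
    using assms(1-3) by (simp add: indep_var_distribution_eq borel_prod)
  show "AE p in distr M borel (\<lambda>\<omega>. (X \<omega>, Z \<omega>)). P p"
    unfolding XZ by (rule assms(4))
qed

text \<open>Replacing \<open>Z\<close> by \<open>1 - Z\<close> does not change the joint law of \<open>((X, Y), (Z, W))\<close>, and it
  turns \<open>F X Z\<close> into \<open>1 - F X Z\<close> almost surely.\<close>
lemma distr_reflect_fst_if_AE_reflect: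
  fixes X Y Z W :: "'a \<Rightarrow> real" and F G :: "real \<Rightarrow> real \<Rightarrow> real"
  assumes [measurable]: "X \<in> borel_measurable M" "Y \<in> borel_measurable M"
      "Z \<in> borel_measurable M" "W \<in> borel_measurable M"
      "case_prod F \<in> borel_measurable (borel \<Otimes>\<^sub>M borel)"
      "case_prod G \<in> borel_measurable (borel \<Otimes>\<^sub>M borel)"
    and X: "distr M borel X = unif01" and Z: "distr M borel Z = unif01"
    and ZW: "indep_var borel Z borel W"
    and XY_ZW: "indep_var borel (\<lambda>\<omega>. (X \<omega>, Y \<omega>)) borel (\<lambda>\<omega>. (Z \<omega>, W \<omega>))"
    and F: "AE p in unif01 \<Otimes>\<^sub>M unif01. F (fst p) (1 - snd p) = 1 - F (fst p) (snd p)"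
  shows "distr M borel (\<lambda>\<omega>. (F (X \<omega>) (Z \<omega>), G (Y \<omega>) (W \<omega>)))
       = distr M borel (\<lambda>\<omega>. (1 - F (X \<omega>) (Z \<omega>), G (Y \<omega>) (W \<omega>)))"
proof -
  note fst_borel = measurable_fst[where ?M1.0 = "borel :: real measure" and ?M2.0 = "borel :: real measure",
      unfolded borel_prod]
  have "indep_var borel X borel Z"
    using indep_var_compose[OF XY_ZW fst_borel fst_borel] by (simp add: comp_def)
  from AE_indep_unif01_pair[OF X Z this F]
  have AE_reflect: "AE \<omega> in M. F (X \<omega>) (1 - Z \<omega>) = 1 - F (X \<omega>) (Z \<omega>)" by simp
  have "indep_var borel (\<lambda>\<omega>. (X \<omega>, Y \<omega>)) borel (\<lambda>\<omega>. (1 - Z \<omega>, W \<omega>))"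
    using indep_var_compose[OF XY_ZW, of id borel "\<lambda>p. (1 - fst p, snd p)" borel]
    by (simp add: comp_def flip: borel_prod)
  then have joint: "distr M borel (\<lambda>\<omega>. ((X \<omega>, Y \<omega>), (1 - Z \<omega>, W \<omega>)))
      = distr M borel (\<lambda>\<omega>. ((X \<omega>, Y \<omega>), (Z \<omega>, W \<omega>)))"
    by (rule distr_pair_eq_if_indep[OF _ XY_ZW refl distr_reflect_indep_unif01[OF Z ZW]])
  let ?\<Phi> = "\<lambda>q::(real \<times> real) \<times> real \<times> real.
    (F (fst (fst q)) (fst (snd q)), G (snd (fst q)) (snd (snd q)))"
  have [measurable]: "?\<Phi> \<in> borel \<rightarrow>\<^sub>M borel"
    unfolding borel_prod[symmetric] by measurable
  have "distr M borel (\<lambda>\<omega>. (1 - F (X \<omega>) (Z \<omega>), G (Y \<omega>) (W \<omega>)))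
      = distr M borel (\<lambda>\<omega>. ?\<Phi> ((X \<omega>, Y \<omega>), (1 - Z \<omega>, W \<omega>)))"
    using AE_reflect by (intro distr_cong_AE) (auto simp flip: borel_prod)
  also have "\<dots> = distr (distr M borel (\<lambda>\<omega>. ((X \<omega>, Y \<omega>), (1 - Z \<omega>, W \<omega>)))) borel ?\<Phi>"
    by (subst distr_distr) (auto simp: comp_def simp flip: borel_prod)
  also have "\<dots> = distr M borel (\<lambda>\<omega>. ?\<Phi> ((X \<omega>, Y \<omega>), (Z \<omega>, W \<omega>)))"
    unfolding joint by (subst distr_distr) (auto simp: comp_def simp flip: borel_prod)
  finally show ?thesis by simp
qed

end

theorem proposition9:
  fixes M :: "'a measure"
    and Us Vs Z1 Z2 :: "'a \<Rightarrow> real"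
    and T1 T2 :: "real \<Rightarrow> real"
    and a1 a2 :: "nat \<Rightarrow> real" and L1 L2 :: nat
  assumes "prob_space M"
    and "Us \<in> borel_measurable M" and "Vs \<in> borel_measurable M"
    and "Z1 \<in> borel_measurable M" and "Z2 \<in> borel_measurable M"
    and "distr M lborel Us = unif01" and "distr M lborel Vs = unif01"
    and "distr M lborel Z1 = unif01" and "distr M lborel Z2 = unif01"
    and "prob_space.indep_var M borel Z1 borel Z2"
    and "prob_space.indep_var M borel (\<lambda>\<omega>. (Us \<omega>, Vs \<omega>)) borel (\<lambda>\<omega>. (Z1 \<omega>, Z2 \<omega>))"
    and "udp T1" and "regular_partition T1 a1 L1"
    and "udp T2" and "regular_partition T2 a2 L2"
  defines "U \<equiv> (\<lambda>\<omega>. stoch_inv T1 (part_set a1 L1) (Us \<omega>) (Z1 \<omega>))"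
    and "V \<equiv> (\<lambda>\<omega>. stoch_inv T2 (part_set a2 L2) (Vs \<omega>) (Z2 \<omega>))"
  shows "(symmetric_half T1 \<longrightarrow>
            distr M borel (\<lambda>\<omega>. (U \<omega>, V \<omega>)) = distr M borel (\<lambda>\<omega>. (1 - U \<omega>, V \<omega>)))
       \<and> (symmetric_half T2 \<longrightarrow>
            distr M borel (\<lambda>\<omega>. (U \<omega>, V \<omega>)) = distr M borel (\<lambda>\<omega>. (U \<omega>, 1 - V \<omega>)))
       \<and> (symmetric_half T1 \<and> symmetric_half T2 \<longrightarrow>
            distr M borel (\<lambda>\<omega>. (U \<omega>, V \<omega>)) = distr M borel (\<lambda>\<omega>. (1 - U \<omega>, V \<omega>))
          \<and> distr M borel (\<lambda>\<omega>. (U \<omega>, V \<omega>)) = distr M borel (\<lambda>\<omega>. (U \<omega>, 1 - V \<omega>)))"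
proof -
  interpret prob_space M by fact
  interpret T1: regular_udp T1 a1 L1 using assms(12,13) by unfold_locales
  interpret T2: regular_udp T2 a2 L2 using assms(14,15) by unfold_locales
  note [measurable] = assms(2-5) T1.borel_measurable_stoch_inv T2.borel_measurable_stoch_inv
  have unif: "distr M borel Us = unif01" "distr M borel Vs = unif01"
      "distr M borel Z1 = unif01" "distr M borel Z2 = unif01"
    using assms(6-9) by (metis distr_cong sets_lborel)+
  have swap: "(\<lambda>p::real \<times> real. (snd p, fst p)) \<in> borel \<rightarrow>\<^sub>M borel"
    by (simp only: borel_prod[symmetric]) measurable
  have v: "distr M borel (\<lambda>\<omega>. (U \<omega>, V \<omega>)) = distr M borel (\<lambda>\<omega>. (1 - U \<omega>, V \<omega>))"
    if "symmetric_half T1"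
    using distr_reflect_fst_if_AE_reflect[OF assms(2-5) T1.borel_measurable_stoch_inv
        T2.borel_measurable_stoch_inv unif(1,3) assms(10,11) T1.AE_stoch_inv_reflect[OF that]]
    unfolding U_def V_def .
  have h: "distr M borel (\<lambda>\<omega>. (U \<omega>, V \<omega>)) = distr M borel (\<lambda>\<omega>. (U \<omega>, 1 - V \<omega>))"
    if "symmetric_half T2"
  proof -
    have "indep_var borel (\<lambda>\<omega>. (Vs \<omega>, Us \<omega>)) borel (\<lambda>\<omega>. (Z2 \<omega>, Z1 \<omega>))"
      using indep_var_compose[OF assms(11) swap swap] by (simp add: comp_def)
    from distr_reflect_fst_if_AE_reflect[OF assms(3,2,5,4) T2.borel_measurable_stoch_inv
        T1.borel_measurable_stoch_inv unif(2,4) indep_var_sym[OF assms(10)] this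
        T2.AE_stoch_inv_reflect[OF that]]
    have "distr M borel (\<lambda>\<omega>. (V \<omega>, U \<omega>)) = distr M borel (\<lambda>\<omega>. (1 - V \<omega>, U \<omega>))"
      unfolding U_def V_def by simp
    then show ?thesis by (rule distr_swap_eq[rotated 4]) (simp_all add: U_def V_def)
  qed
  show ?thesis using v h by blast
qed

end
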